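(* Let $n=2m+1$ be odd with $n\ge5$, and work in the polynomial ring $\mathbb Z_2[R,V_1,\dots,V_{n-1}]$ (no relations imposed). Let $D_n=\binom{n-1}{m+1}=\binom{n-1}{m-1}$, and enumerate the $(m+1)$-element subsets of $\{1,\dots,n-1\}$ as $L_1,\dots,L_{D_n}$. For each $i$ set $$p_i=\sum_{S\subset L_i,\ |S|=m-1}R\prod_{j\in S}V_j,\qquad f_i=\sum_{S\subset L_i,\ |S|\le m-2}R^{|L_i|-|S|-1}\prod_{j\in S}V_j$$ (the second sum including $S=\emptyset$). Let $$X_{m+1}=\Big\{\xi=(\xi_1,\dots,\xi_{D_n})\in(\mathbb Z_2)^{D_n}:\ \sum_{i=1}^{D_n}\xi_ip_i=0\Big\}.$$ Then (i) $\dim_{\mathbb Z_2}X_{m+1}=\beta_n$, where $\beta_n=D_n-\alpha_n$ and $\alpha_n=\sum_{i=0}^{m-1}2^{m-1-i}\binom{2i}{i}$; and (ii) for any basis $\Omega_{m+1}$ of $X_{m+1}$, the polynomials $F_\xi=\sum_{i=1}^{D_n}\xi_if_i$, $\xi\in\Omega_{m+1}$, are linearly independent over $\mathbb Z_2$.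
   Context: $\mathbb Z_2=\mathbb Z/2\mathbb Z$. Note $p_i+f_i=\sum_{S\subset L_i,\,|S|\le m-1}R^{|L_i-S|-1}\prod_{j\in S}V_j$. *)

theory Defs
  imports Main "HOL-Library.Z2" "HOL-Library.Poly_Mapping" "HOL-Library.Function_Algebras"
begin

(* Polynomial ring Z_2[R, V_1, ..., V_{n-1}]:  (nat \<Rightarrow>\<^sub>0 nat) \<Rightarrow>\<^sub>0 bit,
   variable 0 is R, variable j (1 \<le> j \<le> n-1) is V_j. *)
type_synonym z2poly = "(nat \<Rightarrow>\<^sub>0 nat) \<Rightarrow>\<^sub>0 bit"

definition mono :: "nat \<Rightarrow> nat set \<Rightarrow> z2poly" where
  "mono k S = Poly_Mapping.single
      (Poly_Mapping.single 0 k + (\<Sum>j\<in>S. Poly_Mapping.single j 1)) (1::bit)"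

definition pscale :: "bit \<Rightarrow> z2poly \<Rightarrow> z2poly" where
  "pscale c P = Poly_Mapping.single 0 c * P"

(* the (m+1)-element subsets L of {1..n-1}, n = 2m+1 *)
definition Lsets :: "nat \<Rightarrow> nat set set" where
  "Lsets m = {L. L \<subseteq> {1..2*m} \<and> card L = m + 1}"

definition pp :: "nat \<Rightarrow> nat set \<Rightarrow> z2poly" where
  "pp m L = (\<Sum>S\<in>{S. S \<subseteq> L \<and> card S = m - 1}. mono 1 S)"

definition ff :: "nat \<Rightarrow> nat set \<Rightarrow> z2poly" where
  "ff m L = (\<Sum>S\<in>{S. S \<subseteq> L \<and> card S \<le> m - 2}. mono (card L - card S - 1) S)"

(* vectors xi in Z_2^{D_n}, indexed by the sets L in Lsets m *)
definition Xspace :: "nat \<Rightarrow> (nat set \<Rightarrow> bit) set" where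
  "Xspace m = {xi. (\<forall>L. L \<notin> Lsets m \<longrightarrow> xi L = 0)
                  \<and> (\<Sum>L\<in>Lsets m. pscale (xi L) (pp m L)) = 0}"

definition Fxi :: "nat \<Rightarrow> (nat set \<Rightarrow> bit) \<Rightarrow> z2poly" where
  "Fxi m xi = (\<Sum>L\<in>Lsets m. pscale (xi L) (ff m L))"

definition vscale :: "bit \<Rightarrow> (nat set \<Rightarrow> bit) \<Rightarrow> (nat set \<Rightarrow> bit)" where
  "vscale c xi = (\<lambda>L. c * xi L)"

definition z2_indep_family :: "(bit \<Rightarrow> 'v \<Rightarrow> 'v::comm_monoid_add) \<Rightarrow> ('i \<Rightarrow> 'v) \<Rightarrow> 'i set \<Rightarrow> bool" where
  "z2_indep_family sc v I \<longleftrightarrow> finite I \<and>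
     (\<forall>c. (\<Sum>i\<in>I. sc (c i) (v i)) = 0 \<longrightarrow> (\<forall>i\<in>I. c i = 0))"

definition z2_span :: "(bit \<Rightarrow> 'v \<Rightarrow> 'v::comm_monoid_add) \<Rightarrow> 'v set \<Rightarrow> 'v set" where
  "z2_span sc B = {(\<Sum>b\<in>B. sc (c b) b) | c. True}"

definition z2_basis :: "(bit \<Rightarrow> 'v \<Rightarrow> 'v::comm_monoid_add) \<Rightarrow> 'v set \<Rightarrow> 'v set \<Rightarrow> bool" where
  "z2_basis sc X B \<longleftrightarrow> B \<subseteq> X \<and> z2_indep_family sc id B \<and> z2_span sc B = X"

definition alpha :: "nat \<Rightarrow> nat" where
  "alpha m = (\<Sum>i<m. 2 ^ (m - 1 - i) * ((2 * i) choose i))"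

end

theory Submission
  imports Defs
begin

(*
  Index a vector xi by the (m+1)-subsets L of U = {1..2m}. The coefficient of R V^S in
  sum_L xi_L p_L is the sum of xi_L over the (m+1)-sets L containing S, so X_{m+1} is the
  kernel over Z_2 of the inclusion map from (m+1)-subsets to (m-1)-subsets of U.

  Enlarging U by two points a and b, a kernel vector is determined by its values on the sets
  avoiding a and b, which are arbitrary, and by its values on the sets through exactly one of
  a, b, each corrected by the upper sums of the first part; these corrected parts lie in the
  kernel for U itself, while the values on the sets through both points are forced. Hence
  dim X_{m+2} = binom(2m, m+2) + 2 dim X_{m+1}, whose solution is beta_n.

  For |S| <= m-2 the coefficient of R^(m-|S|) V^S in F_xi is again the upper sum of xi at S.
  So if sum c_xi F_xi = 0, then zeta = sum c_xi xi has vanishing upper sums at all sets of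
  size at most m-1, and inverting over the subsets of the complement of an (m+1)-set, which
  has m-1 elements, gives zeta = 0.
*)

declare add_bit_eq_xor [simp del] mult_bit_eq_and [simp del]

lemma bit_add_self [simp]: "(x::bit) + x = 0"
  by (cases x) simp_all

lemma bit_add_eq_0_iff: "(x::bit) + y = 0 \<longleftrightarrow> x = y"
  by (cases x; cases y) simp_all

lemma of_nat_bit: "(of_nat n :: bit) = (if even n then 0 else 1)"
  by (induction n) auto

lemma small_binomials:
  "(2::nat) choose 1 = 2" "(3::nat) choose 1 = 3" "(3::nat) choose 2 = 3"
  "(4::nat) choose 2 = 6" "(4::nat) choose 3 = 4"
  by (simp_all add: numeral_eq_Suc)

section \<open>Subsets of fixed size and upper sums\<close>

definition ksubsets :: "'a set \<Rightarrow> nat \<Rightarrow> 'a set set" where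
  "ksubsets U k = {L. L \<subseteq> U \<and> card L = k}"

definition supported_on :: "'a set \<Rightarrow> ('a \<Rightarrow> 'b::zero) set" where
  "supported_on A = {f. \<forall>x. x \<notin> A \<longrightarrow> f x = 0}"

definition zero_outside :: "'a set \<Rightarrow> ('a \<Rightarrow> 'b::zero) \<Rightarrow> 'a \<Rightarrow> 'b" where
  "zero_outside A g x = (if x \<in> A then g x else 0)"

definition supset_sum :: "'a set \<Rightarrow> nat \<Rightarrow> ('a set \<Rightarrow> 'b::comm_monoid_add) \<Rightarrow> 'a set \<Rightarrow> 'b" where
  "supset_sum U k g S = (\<Sum>L\<in>ksubsets U k. if S \<subseteq> L then g L else 0)"

lemma zero_outside_supported_on [simp]: "zero_outside A g \<in> supported_on A"
  by (simp add: zero_outside_def supported_on_def)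

lemma zero_outside_supported_on_eq:
  "f \<in> supported_on A \<Longrightarrow> zero_outside A f = f"
  by (auto simp: zero_outside_def supported_on_def fun_eq_iff)

lemma zero_outside_cong:
  "(\<And>x. x \<in> A \<Longrightarrow> f x = g x) \<Longrightarrow> zero_outside A f = zero_outside A g"
  by (simp add: zero_outside_def fun_eq_iff)

lemma card_supported_on:
  assumes "finite A"
  shows "finite (supported_on A :: ('a \<Rightarrow> bit) set)" and "card (supported_on A :: ('a \<Rightarrow> bit) set) = 2 ^ card A"
proof -
  have "bij_betw (\<lambda>f. {x. f x = 1}) (supported_on A :: ('a \<Rightarrow> bit) set) (Pow A)"
  proof (rule bij_betw_byWitness[where f' = "\<lambda>S x. if x \<in> S then 1 else 0"])
    show "\<forall>f\<in>supported_on A. (\<lambda>x. if x \<in> {x. f x = 1} then 1 else 0) = (f :: 'a \<Rightarrow> bit)"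
      by (auto simp: fun_eq_iff)
  qed (auto simp: supported_on_def)
  then show "finite (supported_on A :: ('a \<Rightarrow> bit) set)" "card (supported_on A :: ('a \<Rightarrow> bit) set) = 2 ^ card A"
    using assms by (auto simp: bij_betw_finite bij_betw_same_card card_Pow)
qed

lemma finite_ksubsets [simp]: "finite U \<Longrightarrow> finite (ksubsets U k)"
  by (simp add: ksubsets_def)

lemma card_ksubsets: "finite U \<Longrightarrow> card (ksubsets U k) = card U choose k"
  unfolding ksubsets_def by (rule n_subsets)

lemma finite_mem_ksubsets: "finite U \<Longrightarrow> L \<in> ksubsets U k \<Longrightarrow> finite L"
  by (auto simp: ksubsets_def intro: finite_subset)

lemma ksubsets_mono: "L \<in> ksubsets U k \<Longrightarrow> U \<subseteq> V \<Longrightarrow> L \<in> ksubsets V k"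
  by (auto simp: ksubsets_def)

lemma insert_mem_ksubsets:
  assumes "finite U" "a \<notin> U" "L \<in> ksubsets U k"
  shows "insert a L \<in> ksubsets (insert a U) (Suc k)"
proof -
  have "finite L" "a \<notin> L"
    using assms finite_mem_ksubsets by (auto simp: ksubsets_def)
  then show ?thesis
    using assms by (auto simp: ksubsets_def)
qed

lemma mem_ksubsets_insert_iff:
  assumes "finite U" "a \<notin> U"
  shows "a \<in> L \<Longrightarrow> L \<in> ksubsets (insert a U) (Suc k) \<longleftrightarrow> L - {a} \<in> ksubsets U k"
    and "a \<notin> L \<Longrightarrow> L \<in> ksubsets (insert a U) k \<longleftrightarrow> L \<in> ksubsets U k"
proof -
  assume aL: "a \<in> L"
  show "L \<in> ksubsets (insert a U) (Suc k) \<longleftrightarrow> L - {a} \<in> ksubsets U k"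
  proof
    assume L: "L \<in> ksubsets (insert a U) (Suc k)"
    then have "finite L" using assms finite_mem_ksubsets by blast
    then show "L - {a} \<in> ksubsets U k" using L aL by (auto simp: ksubsets_def)
  next
    assume L: "L - {a} \<in> ksubsets U k"
    then have "insert a (L - {a}) \<in> ksubsets (insert a U) (Suc k)"
      using assms by (rule insert_mem_ksubsets[rotated 2])
    then show "L \<in> ksubsets (insert a U) (Suc k)" using aL by (simp add: insert_absorb)
  qed
next
  assume "a \<notin> L"
  then show "L \<in> ksubsets (insert a U) k \<longleftrightarrow> L \<in> ksubsets U k"
    by (auto simp: ksubsets_def)
qed

lemma ball_ksubsets_insert:
  assumes "finite U" "a \<notin> U"
  shows "(\<forall>S\<in>ksubsets (insert a U) n. P S) \<longleftrightarrow>
           (\<forall>S\<in>ksubsets U n. P S) \<and> (\<forall>s. n = Suc s \<longrightarrow> (\<forall>S\<in>ksubsets U s. P (insert a S)))"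
proof -
  have "S \<in> ksubsets U n \<or> (\<exists>s S'. n = Suc s \<and> S' \<in> ksubsets U s \<and> S = insert a S')"
    if S: "S \<in> ksubsets (insert a U) n" for S
  proof (cases "a \<in> S")
    case True
    have "finite S" using S assms(1) finite_mem_ksubsets by blast
    then have "n = Suc (card (S - {a}))" "S - {a} \<in> ksubsets U (card (S - {a}))"
      using S True card_Suc_Diff1[of S a] by (auto simp: ksubsets_def)
    then show ?thesis using True by blast
  qed (use S in \<open>auto simp: ksubsets_def\<close>)
  then show ?thesis
    using assms by (auto intro: ksubsets_mono insert_mem_ksubsets)
qed

lemma supset_sum_cong:
  "(\<And>L. L \<in> ksubsets U k \<Longrightarrow> g L = h L) \<Longrightarrow> supset_sum U k g S = supset_sum U k h S"
  unfolding supset_sum_def by (rule sum.cong) auto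

lemma supset_sum_zero_outside [simp]:
  "supset_sum U k (zero_outside (ksubsets U k) g) = supset_sum U k g"
  by (rule ext, rule supset_sum_cong) (simp add: zero_outside_def)

lemma supset_sum_add: "supset_sum U k (\<lambda>L. g L + h L) S = supset_sum U k g S + supset_sum U k h S"
  unfolding supset_sum_def sum.distrib[symmetric] by (rule sum.cong) auto

lemma supset_sum_not_subset: "\<not> S \<subseteq> U \<Longrightarrow> supset_sum U k g S = 0"
  unfolding supset_sum_def ksubsets_def by (rule sum.neutral) auto

lemma supset_sum_self:
  assumes "finite U" "S \<in> ksubsets U k"
  shows "supset_sum U k g S = g S"
proof -
  have "S \<subseteq> L \<longleftrightarrow> L = S" if L: "L \<in> ksubsets U k" for L
  proof
    assume "S \<subseteq> L"
    moreover have "finite L" "card S = card L"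
      using L assms finite_mem_ksubsets by (auto simp: ksubsets_def)
    ultimately show "L = S" by (metis card_subset_eq)
  qed simp
  then have "supset_sum U k g S = (\<Sum>L\<in>ksubsets U k. if L = S then g L else 0)"
    unfolding supset_sum_def by (intro sum.cong) auto
  also have "\<dots> = g S"
    using assms by (simp add: sum.delta')
  finally show ?thesis .
qed

lemma supset_sum_insert:
  assumes "finite U" "a \<notin> U"
  shows "supset_sum (insert a U) (Suc k) g S =
           supset_sum U (Suc k) g S + supset_sum U k (g \<circ> insert a) (S - {a})"
proof -
  have split: "ksubsets (insert a U) (Suc k) = ksubsets U (Suc k) \<union> insert a ` ksubsets U k"
    using ball_ksubsets_insert[OF assms, of "Suc k" "\<lambda>S. S \<in> ksubsets U (Suc k) \<union> insert a ` ksubsets U k"]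
      ball_ksubsets_insert[OF assms, of "Suc k" "\<lambda>S. S \<in> ksubsets (insert a U) (Suc k)"]
    by (auto intro: ksubsets_mono)
  have a_notin: "a \<notin> L" if "L \<in> ksubsets U j" for L j
    using that assms by (auto simp: ksubsets_def)
  have inj: "inj_on (insert a) (ksubsets U k)"
    by (rule inj_onI) (metis a_notin Diff_insert_absorb)
  have "supset_sum (insert a U) (Suc k) g S = supset_sum U (Suc k) g S
          + (\<Sum>L\<in>insert a ` ksubsets U k. if S \<subseteq> L then g L else 0)"
    unfolding supset_sum_def split using assms a_notin
    by (subst sum.union_disjoint) auto
  also have "(\<Sum>L\<in>insert a ` ksubsets U k. if S \<subseteq> L then g L else 0)
               = supset_sum U k (g \<circ> insert a) (S - {a})"
    unfolding supset_sum_def sum.reindex[OF inj] by (intro sum.cong) auto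
  finally show ?thesis .
qed

lemma card_intermediate_sets:
  assumes "finite L" "S \<subseteq> L" "card S \<le> i"
  shows "card {T. S \<subseteq> T \<and> T \<subseteq> L \<and> card T = i} = (card L - card S) choose (i - card S)"
proof -
  have fS: "finite S" using assms finite_subset by blast
  have "bij_betw (\<lambda>T. T - S) {T. S \<subseteq> T \<and> T \<subseteq> L \<and> card T = i} (ksubsets (L - S) (i - card S))"
  proof (rule bij_betw_byWitness[where f' = "\<lambda>R. R \<union> S"])
    show "(\<lambda>R. R \<union> S) ` ksubsets (L - S) (i - card S) \<subseteq> {T. S \<subseteq> T \<and> T \<subseteq> L \<and> card T = i}"
    proof clarify
      fix R assume R: "R \<in> ksubsets (L - S) (i - card S)"
      then have "finite R" "R \<inter> S = {}"
        using assms(1) finite_mem_ksubsets by (auto simp: ksubsets_def)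
      then show "S \<subseteq> R \<union> S \<and> R \<union> S \<subseteq> L \<and> card (R \<union> S) = i"
        using R assms fS by (auto simp: ksubsets_def card_Un_disjoint)
    qed
  qed (use assms fS in \<open>auto simp: ksubsets_def card_Diff_subset\<close>)
  then have "card {T. S \<subseteq> T \<and> T \<subseteq> L \<and> card T = i} = card (L - S) choose (i - card S)"
    using assms by (simp add: bij_betw_same_card card_ksubsets)
  then show ?thesis
    using assms fS by (simp add: card_Diff_subset)
qed

lemma supset_sum_supset_sum:
  fixes g :: "'a set \<Rightarrow> 'b::semiring_1"
  assumes "finite U" "card S \<le> i"
  shows "supset_sum U i (supset_sum U j g) S = of_nat ((j - card S) choose (i - card S)) * supset_sum U j g S"
proof -
  have "supset_sum U i (supset_sum U j g) S
          = (\<Sum>L\<in>ksubsets U j. \<Sum>T\<in>ksubsets U i. if S \<subseteq> T \<and> T \<subseteq> L then g L else 0)"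
    unfolding supset_sum_def by (subst sum.swap) (auto intro!: sum.cong)
  also have "\<dots> = (\<Sum>L\<in>ksubsets U j. of_nat ((j - card S) choose (i - card S)) * (if S \<subseteq> L then g L else 0))"
  proof (rule sum.cong)
    fix L assume L: "L \<in> ksubsets U j"
    have "{T \<in> ksubsets U i. S \<subseteq> T \<and> T \<subseteq> L} = {T. S \<subseteq> T \<and> T \<subseteq> L \<and> card T = i}"
      using L by (auto simp: ksubsets_def)
    then have "(\<Sum>T\<in>ksubsets U i. if S \<subseteq> T \<and> T \<subseteq> L then g L else 0)
            = of_nat (card {T. S \<subseteq> T \<and> T \<subseteq> L \<and> card T = i}) * g L"
      using assms(1) by (simp flip: sum.inter_filter)
    also have "\<dots> = of_nat ((j - card S) choose (i - card S)) * (if S \<subseteq> L then g L else 0)"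
    proof (cases "S \<subseteq> L")
      case True
      then show ?thesis
        using L assms card_intermediate_sets[of L S i] finite_mem_ksubsets[OF assms(1) L]
        by (simp add: ksubsets_def)
    next
      case False
      then have "card {T. S \<subseteq> T \<and> T \<subseteq> L \<and> card T = i} = 0"
        by (metis (no_types, lifting) card.empty empty_Collect_eq order_trans)
      then show ?thesis using False by simp
    qed
    finally show "(\<Sum>T\<in>ksubsets U i. if S \<subseteq> T \<and> T \<subseteq> L then g L else 0)
                    = of_nat ((j - card S) choose (i - card S)) * (if S \<subseteq> L then g L else 0)" .
  qed simp
  also have "\<dots> = of_nat ((j - card S) choose (i - card S)) * supset_sum U j g S"
    unfolding supset_sum_def by (simp add: sum_distrib_left)
  finally show ?thesis .
qed

lemma supset_sum_supset_sum_offset: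
  fixes g :: "'a set \<Rightarrow> 'b::semiring_1"
  assumes "finite U" "card S = s"
  shows "supset_sum U (s + i) (supset_sum U (s + j) g) S = of_nat (j choose i) * supset_sum U (s + j) g S"
  using supset_sum_supset_sum[OF assms(1), of S "s + i" "s + j" g] assms(2) by simp

lemma supset_sum_inversion:
  fixes x :: "'a set \<Rightarrow> bit"
  assumes U: "finite U" and x: "x \<in> supported_on (ksubsets U k)" and L0: "L0 \<in> ksubsets U k"
  shows "x L0 = (\<Sum>T\<in>Pow (U - L0). supset_sum U k x T)"
proof -
  have "(\<Sum>T\<in>Pow (U - L0). if T \<subseteq> L then x L else 0) = (if L = L0 then x L else 0)"
    if L: "L \<in> ksubsets U k" for L
  proof -
    have "{T \<in> Pow (U - L0). T \<subseteq> L} = Pow ((U - L0) \<inter> L)"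
      by auto
    then have "(\<Sum>T\<in>Pow (U - L0). if T \<subseteq> L then x L else 0) = of_nat (card (Pow ((U - L0) \<inter> L))) * x L"
      using U by (simp flip: sum.inter_filter)
    also have "\<dots> = (if (U - L0) \<inter> L = {} then x L else 0)"
      using U by (simp add: card_Pow of_nat_bit del: Pow_Int_eq)
    also have "(U - L0) \<inter> L = {} \<longleftrightarrow> L = L0"
    proof
      assume "(U - L0) \<inter> L = {}"
      then have "L \<subseteq> L0"
        using L by (auto simp: ksubsets_def)
      then show "L = L0"
        using L L0 U finite_mem_ksubsets card_subset_eq by (metis (mono_tags, lifting) ksubsets_def mem_Collect_eq)
    qed auto
    finally show ?thesis .
  qed
  then have "(\<Sum>T\<in>Pow (U - L0). supset_sum U k x T) = (\<Sum>L\<in>ksubsets U k. if L = L0 then x L else 0)"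
    unfolding supset_sum_def by (subst sum.swap) (simp add: sum.If_cases)
  also have "\<dots> = x L0"
    using L0 U by (simp add: sum.delta')
  finally show ?thesis ..
qed

lemma eq_0_if_low_supset_sums_vanish:
  fixes x :: "'a set \<Rightarrow> bit"
  assumes U: "finite U" and x: "x \<in> supported_on (ksubsets U k)"
    and vanish: "\<And>T. T \<subseteq> U \<Longrightarrow> card T + k \<le> card U \<Longrightarrow> supset_sum U k x T = 0"
  shows "x = 0"
proof
  fix L0
  show "x L0 = 0 L0"
  proof (cases "L0 \<in> ksubsets U k")
    case True
    have L0: "L0 \<subseteq> U" "card L0 = k" "finite L0"
      using True finite_mem_ksubsets[OF U True] by (auto simp: ksubsets_def)
    have "supset_sum U k x T = 0" if T: "T \<in> Pow (U - L0)" for T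
    proof (rule vanish)
      have "card T \<le> card (U - L0)"
        using T U by (intro card_mono) auto
      moreover have "card (U - L0) = card U - k"
        using L0 by (simp add: card_Diff_subset)
      moreover have "k \<le> card U"
        using L0 U card_mono by metis
      ultimately show "card T + k \<le> card U"
        by linarith
    qed (use T in auto)
    then show ?thesis
      using supset_sum_inversion[OF U x True] by simp
  qed (use x in \<open>simp add: supported_on_def\<close>)
qed

section \<open>The inclusion kernel and its dimension\<close>

definition incl_kernel :: "'a set \<Rightarrow> nat \<Rightarrow> nat \<Rightarrow> ('a set \<Rightarrow> bit) set" where
  "incl_kernel U k t = {x \<in> supported_on (ksubsets U k). \<forall>S\<in>ksubsets U t. supset_sum U k x S = 0}"

lemma finite_incl_kernel: "finite U \<Longrightarrow> finite (incl_kernel U k t)"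
  by (rule finite_subset[OF _ card_supported_on(1)]) (auto simp: incl_kernel_def)

lemma incl_kernel_full: "finite U \<Longrightarrow> incl_kernel U (card U) 0 = {0}"
proof (intro equalityI subsetI)
  assume U: "finite U"
  have full: "ksubsets U (card U) = {U}"
    using U card_subset_eq[of U] by (auto simp: ksubsets_def)
  fix x assume x: "x \<in> incl_kernel U (card U) 0"
  have "{} \<in> ksubsets U 0"
    by (simp add: ksubsets_def)
  then have "supset_sum U (card U) x {} = 0"
    using x by (simp add: incl_kernel_def)
  then have "x U = 0"
    by (simp add: supset_sum_def full)
  moreover have "x L = 0" if "L \<noteq> U" for L
    using x that by (simp add: incl_kernel_def supported_on_def full)
  ultimately show "x \<in> {0}"
    by (metis singletonI zero_fun_def ext)
next
  fix x :: "'a set \<Rightarrow> bit" assume "x \<in> {0}"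
  then show "x \<in> incl_kernel U (card U) 0"
    by (simp add: incl_kernel_def supported_on_def supset_sum_def zero_fun_def)
qed

lemma incl_kernel_vanishes_below:
  assumes "finite U" "u \<in> incl_kernel U (q + 3) (q + 1)" "S \<in> ksubsets U q"
  shows "supset_sum U (q + 3) u S = 0"
proof -
  have "supset_sum U (q + 1) (supset_sum U (q + 3) u) S = supset_sum U (q + 3) u S"
    using supset_sum_supset_sum_offset[OF assms(1), of S q 1 3 u] assms(3)
    by (simp add: ksubsets_def small_binomials)
  moreover have "supset_sum U (q + 1) (supset_sum U (q + 3) u) S = supset_sum U (q + 1) (\<lambda>_. 0) S"
    using assms(2) by (intro supset_sum_cong) (simp add: incl_kernel_def)
  ultimately show ?thesis
    by (simp add: supset_sum_def)
qed

(* Adding the upper sums of f is an involution (twist_twist): it extracts the one-point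
   components of a kernel vector in kernel_split and puts them back in kernel_join. *)
definition twist :: "'a set \<Rightarrow> nat \<Rightarrow> ('a set \<Rightarrow> bit) \<Rightarrow> ('a set \<Rightarrow> bit) \<Rightarrow> 'a set \<Rightarrow> bit" where
  "twist U r f u = zero_outside (ksubsets U (r + 2)) (\<lambda>L. u L + supset_sum U (r + 3) f L)"

lemma twist_twist: "twist U r f (twist U r f u) = zero_outside (ksubsets U (r + 2)) u"
  by (simp add: twist_def zero_outside_def fun_eq_iff add.assoc)

lemma twist_cong:
  assumes "\<And>L. L \<in> ksubsets U (r + 3) \<Longrightarrow> f L = f' L" "\<And>L. L \<in> ksubsets U (r + 2) \<Longrightarrow> u L = u' L"
  shows "twist U r f u = twist U r f' u'"
  unfolding twist_def using assms supset_sum_cong[of U "r + 3" f f'] by (auto intro: zero_outside_cong)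

lemma supset_sum_twist:
  "supset_sum U (r + 2) (twist U r f u) S = supset_sum U (r + 2) u S + supset_sum U (r + 2) (supset_sum U (r + 3) f) S"
  by (simp add: twist_def supset_sum_add)

lemma supset_sum_twist_incl_kernel:
  assumes "finite U" "u \<in> incl_kernel U (r + 2) r"
  shows "S \<in> ksubsets U r \<Longrightarrow> supset_sum U (r + 2) (twist U r f u) S = supset_sum U (r + 3) f S"
    and "S \<in> ksubsets U q \<Longrightarrow> r = Suc q \<Longrightarrow> supset_sum U (r + 2) (twist U r f u) S = 0"
proof -
  assume S: "S \<in> ksubsets U r"
  then have "supset_sum U (r + 2) u S = 0"
    using assms(2) by (simp add: incl_kernel_def)
  then show "supset_sum U (r + 2) (twist U r f u) S = supset_sum U (r + 3) f S"
    unfolding supset_sum_twist using supset_sum_supset_sum_offset[OF assms(1), of S r 2 3 f] S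
    by (simp add: ksubsets_def small_binomials)
next
  assume S: "S \<in> ksubsets U q" and r: "r = Suc q"
  moreover have "u \<in> incl_kernel U (q + 3) (q + 1)"
    using assms(2) r by (simp add: numeral_eq_Suc)
  ultimately have "supset_sum U (q + 3) u S = 0"
    using incl_kernel_vanishes_below[OF assms(1)] by blast
  moreover have "supset_sum U (q + 3) (supset_sum U (q + 4) f) S = 0"
    using supset_sum_supset_sum_offset[OF assms(1), of S q 3 4 f] S
    by (simp add: ksubsets_def small_binomials)
  ultimately show "supset_sum U (r + 2) (twist U r f u) S = 0"
    unfolding supset_sum_twist r by (simp add: numeral_eq_Suc)
qed

definition glue ::
    "'a \<Rightarrow> 'a \<Rightarrow> ('a set \<Rightarrow> 'b) \<Rightarrow> ('a set \<Rightarrow> 'b) \<Rightarrow> ('a set \<Rightarrow> 'b) \<Rightarrow> ('a set \<Rightarrow> 'b) \<Rightarrow> 'a set \<Rightarrow> 'b"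
  where "glue a b f fa fb fab L =
    (if a \<in> L then if b \<in> L then fab (L - {a, b}) else fa (L - {a})
     else if b \<in> L then fb (L - {b}) else f L)"

definition kernel_split ::
    "'a set \<Rightarrow> 'a \<Rightarrow> 'a \<Rightarrow> nat \<Rightarrow> ('a set \<Rightarrow> bit) \<Rightarrow> ('a set \<Rightarrow> bit) \<times> ('a set \<Rightarrow> bit) \<times> ('a set \<Rightarrow> bit)"
  where "kernel_split U a b r x =
    (zero_outside (ksubsets U (r + 3)) x, twist U r x (x \<circ> insert a), twist U r x (x \<circ> insert b))"

(* The last argument of glue, the values on the sets through both points, is forced by
   the kernel condition (incl_kernel_insert2_top). *)
definition kernel_join ::
    "'a set \<Rightarrow> 'a \<Rightarrow> 'a \<Rightarrow> nat \<Rightarrow> ('a set \<Rightarrow> bit) \<times> ('a set \<Rightarrow> bit) \<times> ('a set \<Rightarrow> bit) \<Rightarrow> 'a set \<Rightarrow> bit"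
  where "kernel_join U a b r = (\<lambda>(f, u, w). glue a b f (twist U r f u) (twist U r f w)
    (zero_outside (ksubsets U (r + 1)) (\<lambda>L. supset_sum U (r + 3) f L
       + supset_sum U (r + 2) (twist U r f u) L + supset_sum U (r + 2) (twist U r f w) L)))"

lemma supset_sum_join_corner:
  fixes f :: "'a set \<Rightarrow> bit"
  assumes "finite U" "u \<in> incl_kernel U (r + 2) r" "w \<in> incl_kernel U (r + 2) r"
  defines "h L \<equiv> supset_sum U (r + 3) f L
       + supset_sum U (r + 2) (twist U r f u) L + supset_sum U (r + 2) (twist U r f w) L"
  shows "S \<in> ksubsets U r \<Longrightarrow> supset_sum U (r + 1) h S = supset_sum U (r + 3) f S"
    and "S \<in> ksubsets U q \<Longrightarrow> r = Suc q \<Longrightarrow> supset_sum U (r + 1) h S = 0"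
proof -
  have split: "supset_sum U (r + 1) h S = supset_sum U (r + 1) (supset_sum U (r + 3) f) S
      + supset_sum U (r + 1) (supset_sum U (r + 2) (twist U r f u)) S
      + supset_sum U (r + 1) (supset_sum U (r + 2) (twist U r f w)) S" for S
    unfolding h_def by (simp add: supset_sum_add)
  show "supset_sum U (r + 1) h S = supset_sum U (r + 3) f S" if S: "S \<in> ksubsets U r"
  proof -
    have card_S: "card S = r"
      using S by (simp add: ksubsets_def)
    show ?thesis
      unfolding split
      using supset_sum_supset_sum_offset[OF assms(1) card_S, of 1 3 f]
        supset_sum_supset_sum_offset[OF assms(1) card_S, of 1 2 "twist U r f u"]
        supset_sum_supset_sum_offset[OF assms(1) card_S, of 1 2 "twist U r f w"]
      by (simp add: small_binomials)
  qed
  show "supset_sum U (r + 1) h S = 0" if S: "S \<in> ksubsets U q" and r: "r = Suc q"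
  proof -
    have card_S: "card S = q"
      using S by (simp add: ksubsets_def)
    have "supset_sum U (r + 2) (twist U r f v) S = 0" if "v = u \<or> v = w" for v
      using supset_sum_twist_incl_kernel(2)[OF assms(1) _ S r] assms(2,3) that by auto
    then show ?thesis
      unfolding split using r supset_sum_supset_sum_offset[OF assms(1) card_S, of 2 4 f]
        supset_sum_supset_sum_offset[OF assms(1) card_S, of 2 3 "twist U r f u"]
        supset_sum_supset_sum_offset[OF assms(1) card_S, of 2 3 "twist U r f w"]
      by (simp add: small_binomials numeral_eq_Suc)
  qed
qed

context
  fixes U :: "'a set" and a b :: 'a
  assumes finite_U: "finite U" and a_neq_b: "a \<noteq> b" and a_notin_U: "a \<notin> U" and b_notin_U: "b \<notin> U"
begin

lemma mem_ksubsets_insert2_iff: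
  shows "a \<in> L \<Longrightarrow> b \<in> L \<Longrightarrow>
           L \<in> ksubsets (insert a (insert b U)) (k + 2) \<longleftrightarrow> L - {a, b} \<in> ksubsets U k"
    and "a \<in> L \<Longrightarrow> b \<notin> L \<Longrightarrow>
           L \<in> ksubsets (insert a (insert b U)) (k + 2) \<longleftrightarrow> L - {a} \<in> ksubsets U (k + 1)"
    and "a \<notin> L \<Longrightarrow> b \<in> L \<Longrightarrow>
           L \<in> ksubsets (insert a (insert b U)) (k + 2) \<longleftrightarrow> L - {b} \<in> ksubsets U (k + 1)"
    and "a \<notin> L \<Longrightarrow> b \<notin> L \<Longrightarrow>
           L \<in> ksubsets (insert a (insert b U)) (k + 2) \<longleftrightarrow> L \<in> ksubsets U (k + 2)"
proof -
  have fin: "finite (insert b U)" and a_notin: "a \<notin> insert b U"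
    using finite_U a_notin_U a_neq_b by auto
  note ins_a = mem_ksubsets_insert_iff[OF fin a_notin]
   and ins_b = mem_ksubsets_insert_iff[OF finite_U b_notin_U]
  show "L \<in> ksubsets (insert a (insert b U)) (k + 2) \<longleftrightarrow> L - {a, b} \<in> ksubsets U k"
    if "a \<in> L" "b \<in> L"
  proof -
    have "L - {a} - {b} = L - {a, b}" by blast
    then show ?thesis
      using that ins_a(1)[of L "k + 1"] ins_b(1)[of "L - {a}" k] a_neq_b by simp
  qed
  show "L \<in> ksubsets (insert a (insert b U)) (k + 2) \<longleftrightarrow> L - {a} \<in> ksubsets U (k + 1)"
    if "a \<in> L" "b \<notin> L"
    using that ins_a(1)[of L "k + 1"] ins_b(2)[of "L - {a}" "k + 1"] by simp
  show "L \<in> ksubsets (insert a (insert b U)) (k + 2) \<longleftrightarrow> L - {b} \<in> ksubsets U (k + 1)"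
    if "a \<notin> L" "b \<in> L"
    using that ins_a(2)[of L "k + 2"] ins_b(1)[of L "k + 1"] by simp
  show "L \<in> ksubsets (insert a (insert b U)) (k + 2) \<longleftrightarrow> L \<in> ksubsets U (k + 2)"
    if "a \<notin> L" "b \<notin> L"
    using that ins_a(2)[of L "k + 2"] ins_b(2)[of L "k + 2"] by simp
qed

lemma glue_eval [simp]:
  assumes "L \<subseteq> U"
  shows "glue a b f fa fb fab L = f L"
    and "glue a b f fa fb fab (insert a L) = fa L"
    and "glue a b f fa fb fab (insert b L) = fb L"
    and "glue a b f fa fb fab (insert a (insert b L)) = fab L"
proof -
  have "a \<notin> L" "b \<notin> L" using assms a_notin_U b_notin_U by auto
  then show "glue a b f fa fb fab L = f L"
    and "glue a b f fa fb fab (insert a L) = fa L"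
    and "glue a b f fa fb fab (insert b L) = fb L"
    and "glue a b f fa fb fab (insert a (insert b L)) = fab L"
    using a_neq_b by (auto simp: glue_def insert_Diff_if)
qed

lemma glue_supported_on:
  assumes "f \<in> supported_on (ksubsets U (k + 2))"
    and "fa \<in> supported_on (ksubsets U (k + 1))" "fb \<in> supported_on (ksubsets U (k + 1))"
    and "fab \<in> supported_on (ksubsets U k)"
  shows "glue a b f fa fb fab \<in> supported_on (ksubsets (insert a (insert b U)) (k + 2))"
  using assms mem_ksubsets_insert2_iff by (auto simp: supported_on_def glue_def)

lemma glue_zero_outside:
  assumes "x \<in> supported_on (ksubsets (insert a (insert b U)) (k + 2))"
  shows "glue a b (zero_outside (ksubsets U (k + 2)) x)
            (zero_outside (ksubsets U (k + 1)) (x \<circ> insert a))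
            (zero_outside (ksubsets U (k + 1)) (x \<circ> insert b))
            (zero_outside (ksubsets U k) (x \<circ> insert a \<circ> insert b)) = x"
proof
  fix L
  have "insert a (insert b (L - {a, b})) = L" if "a \<in> L" "b \<in> L"
    using that by auto
  then show "glue a b (zero_outside (ksubsets U (k + 2)) x)
              (zero_outside (ksubsets U (k + 1)) (x \<circ> insert a))
              (zero_outside (ksubsets U (k + 1)) (x \<circ> insert b))
              (zero_outside (ksubsets U k) (x \<circ> insert a \<circ> insert b)) L = x L"
    using assms mem_ksubsets_insert2_iff
    by (auto simp: supported_on_def glue_def zero_outside_def insert_absorb)
qed

lemma supset_sum_insert2:
  "supset_sum (insert a (insert b U)) (k + 2) g S =
     supset_sum U (k + 2) g S + supset_sum U (k + 1) (g \<circ> insert a) (S - {a})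
     + supset_sum U (k + 1) (g \<circ> insert b) (S - {b})
     + supset_sum U k (g \<circ> insert a \<circ> insert b) (S - {a} - {b})"
proof -
  have fin: "finite (insert b U)" and a_notin: "a \<notin> insert b U"
    using finite_U a_notin_U a_neq_b by auto
  have "supset_sum (insert a (insert b U)) (Suc (Suc k)) g S =
          supset_sum (insert b U) (Suc (Suc k)) g S + supset_sum (insert b U) (Suc k) (g \<circ> insert a) (S - {a})"
    by (rule supset_sum_insert[OF fin a_notin])
  also have "supset_sum (insert b U) (Suc (Suc k)) g S =
               supset_sum U (Suc (Suc k)) g S + supset_sum U (Suc k) (g \<circ> insert b) (S - {b})"
    by (rule supset_sum_insert[OF finite_U b_notin_U])
  also have "supset_sum (insert b U) (Suc k) (g \<circ> insert a) (S - {a}) =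
               supset_sum U (Suc k) (g \<circ> insert a) (S - {a})
               + supset_sum U k (g \<circ> insert a \<circ> insert b) (S - {a} - {b})"
    by (simp add: supset_sum_insert[OF finite_U b_notin_U] comp_assoc)
  finally show ?thesis
    by (simp add: ac_simps comp_def)
qed

lemma supset_sum_insert2_eval:
  assumes "S \<in> ksubsets U j"
  shows "supset_sum (insert a (insert b U)) (k + 2) g S =
           supset_sum U (k + 2) g S + supset_sum U (k + 1) (g \<circ> insert a) S
           + supset_sum U (k + 1) (g \<circ> insert b) S + supset_sum U k (g \<circ> insert a \<circ> insert b) S"
    and "supset_sum (insert a (insert b U)) (k + 2) g (insert a S) =
           supset_sum U (k + 1) (g \<circ> insert a) S + supset_sum U k (g \<circ> insert a \<circ> insert b) S"
    and "supset_sum (insert a (insert b U)) (k + 2) g (insert b S) =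
           supset_sum U (k + 1) (g \<circ> insert b) S + supset_sum U k (g \<circ> insert a \<circ> insert b) S"
    and "supset_sum (insert a (insert b U)) (k + 2) g (insert a (insert b S)) =
           supset_sum U k (g \<circ> insert a \<circ> insert b) S"
proof -
  have "a \<notin> S" "b \<notin> S" "S \<subseteq> U"
    using assms a_notin_U b_notin_U by (auto simp: ksubsets_def)
  then have diffs: "S - {a} = S" "S - {b} = S" "insert a S - {a} = S" "insert b S - {b} = S"
    "insert a S - {b} = insert a S" "insert b S - {a} = insert b S"
    "insert a (insert b S) - {a} - {b} = S"
    using a_neq_b by auto
  have outside: "\<not> insert a S \<subseteq> U" "\<not> insert b S \<subseteq> U"
    "\<not> insert a (insert b S) \<subseteq> U" "\<not> insert a (insert b S) - {a} \<subseteq> U"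
    "\<not> insert a (insert b S) - {b} \<subseteq> U"
    using a_notin_U b_notin_U a_neq_b by auto
  show "supset_sum (insert a (insert b U)) (k + 2) g S =
          supset_sum U (k + 2) g S + supset_sum U (k + 1) (g \<circ> insert a) S
          + supset_sum U (k + 1) (g \<circ> insert b) S + supset_sum U k (g \<circ> insert a \<circ> insert b) S"
    unfolding supset_sum_insert2 using diffs by simp
  show "supset_sum (insert a (insert b U)) (k + 2) g (insert a S) =
          supset_sum U (k + 1) (g \<circ> insert a) S + supset_sum U k (g \<circ> insert a \<circ> insert b) S"
    unfolding supset_sum_insert2 using diffs outside by (simp add: supset_sum_not_subset)
  show "supset_sum (insert a (insert b U)) (k + 2) g (insert b S) =
          supset_sum U (k + 1) (g \<circ> insert b) S + supset_sum U k (g \<circ> insert a \<circ> insert b) S"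
    unfolding supset_sum_insert2 using diffs outside by (simp add: supset_sum_not_subset)
  show "supset_sum (insert a (insert b U)) (k + 2) g (insert a (insert b S)) =
          supset_sum U k (g \<circ> insert a \<circ> insert b) S"
    unfolding supset_sum_insert2 using diffs outside by (simp add: supset_sum_not_subset)
qed

lemma ball_ksubsets_insert2:
  "(\<forall>S\<in>ksubsets (insert a (insert b U)) n. P S) \<longleftrightarrow>
     (\<forall>S\<in>ksubsets U n. P S)
     \<and> (\<forall>s. n = Suc s \<longrightarrow> (\<forall>S\<in>ksubsets U s. P (insert a S) \<and> P (insert b S)))
     \<and> (\<forall>s. n = Suc (Suc s) \<longrightarrow> (\<forall>S\<in>ksubsets U s. P (insert a (insert b S))))"
proof -
  have fin: "finite (insert b U)" and a_notin: "a \<notin> insert b U"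
    using finite_U a_notin_U a_neq_b by auto
  show ?thesis
    unfolding ball_ksubsets_insert[OF fin a_notin] ball_ksubsets_insert[OF finite_U b_notin_U]
    by blast
qed

lemma incl_kernel_insert2_iff:
  "g \<in> incl_kernel (insert a (insert b U)) (k + 2) n \<longleftrightarrow>
     g \<in> supported_on (ksubsets (insert a (insert b U)) (k + 2))
     \<and> (\<forall>S\<in>ksubsets U n. supset_sum U (k + 2) g S + supset_sum U (k + 1) (g \<circ> insert a) S
           + supset_sum U (k + 1) (g \<circ> insert b) S + supset_sum U k (g \<circ> insert a \<circ> insert b) S = 0)
     \<and> (\<forall>s. n = Suc s \<longrightarrow> (\<forall>S\<in>ksubsets U s.
           supset_sum U (k + 1) (g \<circ> insert a) S + supset_sum U k (g \<circ> insert a \<circ> insert b) S = 0 \<and>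
           supset_sum U (k + 1) (g \<circ> insert b) S + supset_sum U k (g \<circ> insert a \<circ> insert b) S = 0))
     \<and> (\<forall>s. n = Suc (Suc s) \<longrightarrow> (\<forall>S\<in>ksubsets U s.
           supset_sum U k (g \<circ> insert a \<circ> insert b) S = 0))"
  unfolding incl_kernel_def mem_Collect_eq ball_ksubsets_insert2
  by (simp add: supset_sum_insert2_eval[simplified] cong: ball_cong)

lemma incl_kernel_insert2_top:
  assumes "x \<in> incl_kernel (insert a (insert b U)) (r + 3) (r + 1)" "S \<in> ksubsets U (r + 1)"
  shows "x (insert a (insert b S)) = supset_sum U (r + 3) x S
           + supset_sum U (r + 2) (x \<circ> insert a) S + supset_sum U (r + 2) (x \<circ> insert b) S"
proof -
  have "supset_sum U (r + 1) (x \<circ> insert a \<circ> insert b) S = x (insert a (insert b S))"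
    unfolding supset_sum_self[OF finite_U assms(2)] by simp
  then show ?thesis
    using assms incl_kernel_insert2_iff[of x "r + 1" "r + 1"] by (simp add: numeral_eq_Suc bit_add_eq_0_iff)
qed

lemma incl_kernel_insert2_side:
  assumes x: "x \<in> incl_kernel (insert a (insert b U)) (r + 3) (r + 1)"
    and S: "S \<in> ksubsets U r" and c: "c = a \<or> c = b"
  shows "supset_sum U (r + 2) (x \<circ> insert c) S = supset_sum U (r + 3) x S"
proof -
  have card_S: "card S = r"
    using S by (simp add: ksubsets_def)
  have "supset_sum U (r + 1) (x \<circ> insert a \<circ> insert b) S
          = supset_sum U (r + 1) (\<lambda>T. supset_sum U (r + 3) x T
              + supset_sum U (r + 2) (x \<circ> insert a) T + supset_sum U (r + 2) (x \<circ> insert b) T) S"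
    using incl_kernel_insert2_top[OF x] by (intro supset_sum_cong) simp
  also have "\<dots> = supset_sum U (r + 3) x S"
    using supset_sum_supset_sum_offset[OF finite_U card_S, of 1 3 x]
      supset_sum_supset_sum_offset[OF finite_U card_S, of 1 2 "x \<circ> insert a"]
      supset_sum_supset_sum_offset[OF finite_U card_S, of 1 2 "x \<circ> insert b"]
    by (simp add: supset_sum_add small_binomials)
  finally have "supset_sum U (r + 1) (x \<circ> insert a \<circ> insert b) S = supset_sum U (r + 3) x S" .
  moreover have "supset_sum U (r + 2) (x \<circ> insert c) S + supset_sum U (r + 1) (x \<circ> insert a \<circ> insert b) S = 0"
    using x S c incl_kernel_insert2_iff[of x "r + 1" "r + 1"] by (auto simp: numeral_eq_Suc)
  ultimately show ?thesis
    by (simp add: bit_add_eq_0_iff)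
qed

lemma kernel_split_mem:
  assumes "x \<in> incl_kernel (insert a (insert b U)) (r + 3) (r + 1)"
  shows "kernel_split U a b r x \<in>
           supported_on (ksubsets U (r + 3)) \<times> incl_kernel U (r + 2) r \<times> incl_kernel U (r + 2) r"
proof -
  have "supset_sum U (r + 2) (twist U r x (x \<circ> insert c)) S = 0"
    if "c = a \<or> c = b" "S \<in> ksubsets U r" for c S
    unfolding supset_sum_twist
    using incl_kernel_insert2_side[OF assms that(2,1)] supset_sum_supset_sum_offset[OF finite_U, of S r 2 3 x] that(2)
    by (simp add: ksubsets_def small_binomials)
  then have "twist U r x (x \<circ> insert c) \<in> incl_kernel U (r + 2) r" if "c = a \<or> c = b" for c
    using that by (simp add: incl_kernel_def twist_def)
  then show ?thesis
    by (simp add: kernel_split_def)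
qed

lemma kernel_join_split:
  assumes x: "x \<in> incl_kernel (insert a (insert b U)) (r + 3) (r + 1)"
  shows "kernel_join U a b r (kernel_split U a b r x) = x"
proof -
  let ?f = "zero_outside (ksubsets U (r + 3)) x"
  have twist_f: "twist U r ?f = twist U r x"
    by (rule ext, rule twist_cong) (simp_all add: zero_outside_def)
  have corner: "zero_outside (ksubsets U (r + 1)) (\<lambda>L. supset_sum U (r + 3) ?f L
      + supset_sum U (r + 2) (zero_outside (ksubsets U (r + 2)) (x \<circ> insert a)) L
      + supset_sum U (r + 2) (zero_outside (ksubsets U (r + 2)) (x \<circ> insert b)) L)
    = zero_outside (ksubsets U (r + 1)) (x \<circ> insert a \<circ> insert b)"
    using incl_kernel_insert2_top[OF x] by (intro zero_outside_cong) simp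
  have "x \<in> supported_on (ksubsets (insert a (insert b U)) ((r + 1) + 2))"
    using x by (simp add: incl_kernel_def numeral_eq_Suc)
  from glue_zero_outside[OF this]
  show ?thesis
    by (simp only: kernel_join_def kernel_split_def prod.case twist_f twist_twist corner)
      (simp add: numeral_eq_Suc)
qed

lemma kernel_split_join:
  assumes p: "p \<in> supported_on (ksubsets U (r + 3)) \<times> incl_kernel U (r + 2) r \<times> incl_kernel U (r + 2) r"
  shows "kernel_split U a b r (kernel_join U a b r p) = p"
proof -
  obtain f u w where p_eq: "p = (f, u, w)" and f: "f \<in> supported_on (ksubsets U (r + 3))"
    and u: "u \<in> incl_kernel U (r + 2) r" and w: "w \<in> incl_kernel U (r + 2) r"
    using p by auto
  let ?fab = "zero_outside (ksubsets U (r + 1)) (\<lambda>L. supset_sum U (r + 3) f L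
       + supset_sum U (r + 2) (twist U r f u) L + supset_sum U (r + 2) (twist U r f w) L)"
  let ?y = "glue a b f (twist U r f u) (twist U r f w) ?fab"
  have on_U: "L \<in> ksubsets U k \<Longrightarrow> L \<subseteq> U" for L k
    by (simp add: ksubsets_def)
  have "zero_outside (ksubsets U (r + 3)) ?y = f"
    using f on_U by (simp add: zero_outside_def supported_on_def fun_eq_iff)
  moreover have "twist U r ?y (?y \<circ> insert a) = u"
  proof -
    have "twist U r ?y (?y \<circ> insert a) = twist U r f (twist U r f u)"
      using on_U by (intro twist_cong) simp_all
    then show ?thesis
      using u by (simp add: twist_twist zero_outside_supported_on_eq incl_kernel_def)
  qed
  moreover have "twist U r ?y (?y \<circ> insert b) = w"
  proof -
    have "twist U r ?y (?y \<circ> insert b) = twist U r f (twist U r f w)"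
      using on_U by (intro twist_cong) simp_all
    then show ?thesis
      using w by (simp add: twist_twist zero_outside_supported_on_eq incl_kernel_def)
  qed
  ultimately show ?thesis
    by (simp add: p_eq kernel_split_def kernel_join_def)
qed

lemma kernel_join_mem:
  assumes p: "p \<in> supported_on (ksubsets U (r + 3)) \<times> incl_kernel U (r + 2) r \<times> incl_kernel U (r + 2) r"
  shows "kernel_join U a b r p \<in> incl_kernel (insert a (insert b U)) (r + 3) (r + 1)"
proof -
  obtain f u w where p_eq: "p = (f, u, w)" and f: "f \<in> supported_on (ksubsets U (r + 3))"
    and u: "u \<in> incl_kernel U (r + 2) r" and w: "w \<in> incl_kernel U (r + 2) r"
    using p by auto
  define h where "h = (\<lambda>L. supset_sum U (r + 3) f L
       + supset_sum U (r + 2) (twist U r f u) L + supset_sum U (r + 2) (twist U r f w) L)"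
  define y where "y = kernel_join U a b r p"
  have y_eq: "y = glue a b f (twist U r f u) (twist U r f w) (zero_outside (ksubsets U (r + 1)) h)"
    by (simp add: y_def p_eq kernel_join_def h_def)
  have on_U: "L \<in> ksubsets U k \<Longrightarrow> L \<subseteq> U" for L k
    by (simp add: ksubsets_def)
  have ss_y: "supset_sum U j y = supset_sum U j f"
    and ss_ya: "supset_sum U j (y \<circ> insert a) = supset_sum U j (twist U r f u)"
    and ss_yb: "supset_sum U j (y \<circ> insert b) = supset_sum U j (twist U r f w)"
    and ss_yab: "supset_sum U j (y \<circ> insert a \<circ> insert b) = supset_sum U j (zero_outside (ksubsets U (r + 1)) h)"
    for j
    unfolding y_eq using on_U by (auto intro!: ext supset_sum_cong)
  have supp: "y \<in> supported_on (ksubsets (insert a (insert b U)) ((r + 1) + 2))"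
    unfolding y_eq using f
    by (intro glue_supported_on) (simp_all add: twist_def numeral_eq_Suc)
  have top: "supset_sum U (r + 1) (zero_outside (ksubsets U (r + 1)) h) S = h S"
    if "S \<in> ksubsets U (r + 1)" for S
    using supset_sum_self[OF finite_U that] that by (simp add: zero_outside_def)
  have side: "supset_sum U (r + 2) (twist U r f v) S + supset_sum U (r + 1) h S = 0"
    if "v = u \<or> v = w" "S \<in> ksubsets U r" for v S
    using supset_sum_twist_incl_kernel(1)[OF finite_U _ that(2)]
      supset_sum_join_corner(1)[OF finite_U u w that(2)] u w that(1)
    by (auto simp: h_def)
  have bottom: "supset_sum U (r + 1) h S = 0" if "r = Suc q" "S \<in> ksubsets U q" for q S
    using supset_sum_join_corner(2)[OF finite_U u w that(2,1)] by (simp add: h_def)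
  have "y \<in> incl_kernel (insert a (insert b U)) ((r + 1) + 2) (r + 1)"
    unfolding incl_kernel_insert2_iff
    using supp top side bottom by (simp add: ss_y ss_ya ss_yb ss_yab h_def numeral_eq_Suc)
  then show ?thesis
    by (simp add: y_def numeral_eq_Suc)
qed

lemma card_incl_kernel_insert2:
  "card (incl_kernel (insert a (insert b U)) (r + 3) (r + 1))
     = 2 ^ (card U choose (r + 3)) * card (incl_kernel U (r + 2) r) ^ 2"
proof -
  have "bij_betw (kernel_split U a b r) (incl_kernel (insert a (insert b U)) (r + 3) (r + 1))
          (supported_on (ksubsets U (r + 3)) \<times> incl_kernel U (r + 2) r \<times> incl_kernel U (r + 2) r)"
    by (rule bij_betw_byWitness[where f' = "kernel_join U a b r"])
      (use kernel_split_mem kernel_join_mem kernel_join_split kernel_split_join in blast)+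
  then show ?thesis
    using finite_U
    by (simp add: bij_betw_same_card card_cartesian_product card_supported_on card_ksubsets power2_eq_square)
qed

end

(* beta_n of the statement, for n = 2m + 1, defined by the recursion of the kernel dimension. *)
fun beta :: "nat \<Rightarrow> nat" where
  "beta 0 = 0"
| "beta (Suc m) = (2 * m choose (m + 2)) + 2 * beta m"

lemma card_incl_kernel: "1 \<le> m \<Longrightarrow> card (incl_kernel {1..2 * m} (m + 1) (m - 1)) = 2 ^ beta m"
proof (induction m rule: nat_induct_at_least)
  case base
  then show ?case
    using incl_kernel_full[of "{1..2::nat}"] by (simp add: numeral_eq_Suc)
next
  case (Suc m)
  have U: "{1..2 * Suc m} = insert (2 * m + 1) (insert (2 * m + 2) {1..2 * m})"
    by auto
  have "card (incl_kernel {1..2 * Suc m} (Suc m + 1) (Suc m - 1))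
        = card (incl_kernel (insert (2 * m + 1) (insert (2 * m + 2) {1..2 * m})) ((m - 1) + 3) ((m - 1) + 1))"
    unfolding U using Suc.hyps by (simp add: numeral_eq_Suc)
  also have "\<dots> = 2 ^ (card {1..2 * m} choose (m + 2)) * card (incl_kernel {1..2 * m} (m + 1) (m - 1)) ^ 2"
    using card_incl_kernel_insert2[of "{1..2 * m}" "2 * m + 1" "2 * m + 2" "m - 1"] Suc.hyps
    by (simp add: numeral_eq_Suc)
  also have "\<dots> = 2 ^ beta (Suc m)"
    using Suc.IH by (simp add: power_add power_mult_distrib power_mult mult_2 power2_eq_square)
  finally show ?case .
qed

lemma alpha_Suc: "alpha (Suc m) = 2 * alpha m + (2 * m choose m)"
proof -
  have "(\<Sum>i<m. 2 ^ (m - i) * (2 * i choose i)) = 2 * alpha m"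
    unfolding alpha_def sum_distrib_left
    by (intro sum.cong) (auto simp: Suc_diff_Suc simp flip: power_Suc)
  then show ?thesis
    by (simp add: alpha_def)
qed

lemma beta_eq: "int (beta m) = int (2 * m choose (m + 1)) - int (alpha m)"
proof (induction m)
  case 0
  then show ?case by (simp add: alpha_def)
next
  case (Suc m)
  have "(2 * m + 2) choose (m + 2) = (2 * m choose (m + 2)) + 2 * (2 * m choose (m + 1)) + (2 * m choose m)"
    by (simp add: numeral_eq_Suc)
  then show ?case
    using Suc.IH by (simp add: alpha_Suc)
qed

section \<open>Bases of subspaces of Z_2-valued functions\<close>

lemma sum_apply: "(\<Sum>i\<in>I. f i) x = (\<Sum>i\<in>I. f i x)"
  by (induction I rule: infinite_finite_induct) auto

lemma vscale_0 [simp]: "vscale 0 x = 0"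
  by (simp add: vscale_def fun_eq_iff)

lemma vscale_1 [simp]: "vscale 1 x = x"
  by (simp add: vscale_def)

lemma vscale_add: "vscale (c + d) x = vscale c x + vscale d x"
  by (simp add: vscale_def fun_eq_iff distrib_right)

lemma bit_fun_add_eq_0_iff: "(x :: 'a \<Rightarrow> bit) + y = 0 \<longleftrightarrow> x = y"
  by (simp add: fun_eq_iff bit_add_eq_0_iff)

lemma supset_sum_sum_vscale:
  "supset_sum U k (\<Sum>\<xi>\<in>\<Omega>. vscale (c \<xi>) \<xi>) S = (\<Sum>\<xi>\<in>\<Omega>. c \<xi> * supset_sum U k \<xi> S)"
proof -
  have "supset_sum U k (\<Sum>\<xi>\<in>\<Omega>. vscale (c \<xi>) \<xi>) S
          = (\<Sum>L\<in>ksubsets U k. \<Sum>\<xi>\<in>\<Omega>. if S \<subseteq> L then c \<xi> * \<xi> L else 0)"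
    unfolding supset_sum_def by (rule sum.cong) (auto simp: sum_apply vscale_def)
  also have "\<dots> = (\<Sum>\<xi>\<in>\<Omega>. c \<xi> * supset_sum U k \<xi> S)"
    unfolding supset_sum_def sum_distrib_left by (subst sum.swap) (auto intro!: sum.cong)
  finally show ?thesis .
qed

definition z2_subspace :: "('a \<Rightarrow> bit) set \<Rightarrow> bool" where
  "z2_subspace X \<longleftrightarrow> 0 \<in> X \<and> (\<forall>x\<in>X. \<forall>y\<in>X. x + y \<in> X)"

lemma sum_vscale_mem:
  assumes "z2_subspace X" "B \<subseteq> X"
  shows "(\<Sum>b\<in>B. vscale (c b) b) \<in> X"
  using assms(2)
proof (induction B rule: infinite_finite_induct)
  case (insert b B)
  then have "vscale (c b) b \<in> X"
    using assms(1) by (cases "c b") (auto simp: z2_subspace_def)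
  moreover have "(\<Sum>b\<in>B. vscale (c b) b) \<in> X"
    using insert by simp
  ultimately show ?case
    using assms(1) unfolding z2_subspace_def sum.insert[OF insert.hyps] by blast
qed (use assms(1) in \<open>simp_all add: z2_subspace_def\<close>)

lemma z2_subspace_incl_kernel: "z2_subspace (incl_kernel U k t)"
proof -
  have "x + y \<in> incl_kernel U k t" if "x \<in> incl_kernel U k t" "y \<in> incl_kernel U k t" for x y
  proof -
    have "x + y = (\<lambda>L. x L + y L)"
      by (simp add: fun_eq_iff)
    then show ?thesis
      using that by (auto simp: incl_kernel_def supported_on_def supset_sum_add)
  qed
  moreover have "0 \<in> incl_kernel U k t"
    by (simp add: incl_kernel_def supported_on_def supset_sum_def zero_fun_def)
  ultimately show ?thesis
    by (simp add: z2_subspace_def)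
qed

lemma z2_indep_familyD:
  "z2_indep_family vscale id B \<Longrightarrow> (\<Sum>i\<in>B. vscale (d i) i) = 0 \<Longrightarrow> i \<in> B \<Longrightarrow> d i = 0"
  by (simp add: z2_indep_family_def)

lemma card_of_z2_basis:
  assumes "z2_basis vscale X B"
  shows "card X = 2 ^ card B"
proof -
  have indep: "z2_indep_family vscale id B" and span: "z2_span vscale B = X"
    using assms by (auto simp: z2_basis_def)
  have "finite B"
    using indep by (simp add: z2_indep_family_def)
  define \<sigma> where "\<sigma> c = (\<Sum>b\<in>B. vscale (c b) b)" for c :: "(nat set \<Rightarrow> bit) \<Rightarrow> bit"
  have "inj_on \<sigma> (supported_on B)"
  proof (rule inj_onI)
    fix c c' assume c: "c \<in> supported_on B" and c': "c' \<in> supported_on B" and eq: "\<sigma> c = \<sigma> c'"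
    have "(\<Sum>b\<in>B. vscale (c b + c' b) (id b)) = \<sigma> c + \<sigma> c'"
      by (simp add: \<sigma>_def vscale_add sum.distrib)
    also have "\<dots> = 0"
      using eq by (simp only: bit_fun_add_eq_0_iff)
    finally have "\<forall>b\<in>B. c b + c' b = 0"
      using z2_indep_familyD[OF indep, of "\<lambda>b. c b + c' b"] by simp
    then show "c = c'"
      using c c' by (auto simp: supported_on_def fun_eq_iff bit_add_eq_0_iff)
  qed
  moreover have "\<sigma> ` supported_on B = X"
  proof -
    have "\<sigma> c = \<sigma> (zero_outside B c)" for c
      unfolding \<sigma>_def by (intro sum.cong) (simp_all add: zero_outside_def)
    then have "\<sigma> ` supported_on B = range \<sigma>"
      by (auto intro: zero_outside_supported_on)
    then show ?thesis
      using span by (auto simp: z2_span_def \<sigma>_def)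
  qed
  ultimately show ?thesis
    using card_image card_supported_on(2)[OF \<open>finite B\<close>] by metis
qed

lemma mem_z2_span_self:
  assumes "finite B" "x \<in> B"
  shows "x \<in> z2_span vscale B"
proof -
  have "vscale (if b = x then 1 else 0) b = (if b = x then x else 0)" for b
    by simp
  then have "(\<Sum>b\<in>B. vscale (if b = x then 1 else 0) b) = x"
    using assms by (simp add: sum.delta)
  then show ?thesis
    unfolding z2_span_def by (intro CollectI exI[where x = "\<lambda>b. if b = x then 1 else 0"]) simp
qed

lemma z2_indep_family_insert:
  assumes indep: "z2_indep_family vscale id B" and x: "x \<notin> z2_span vscale B"
  shows "z2_indep_family vscale id (insert x B)"
proof -
  have "finite B"
    using indep by (simp add: z2_indep_family_def)
  have "x \<notin> B"
    using x mem_z2_span_self[OF \<open>finite B\<close>] by blast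
  have "\<forall>i\<in>insert x B. c i = 0" if sum0: "(\<Sum>i\<in>insert x B. vscale (c i) (id i)) = 0" for c
  proof -
    have rest: "vscale (c x) x + (\<Sum>i\<in>B. vscale (c i) i) = 0"
      using sum0 \<open>finite B\<close> \<open>x \<notin> B\<close> by simp
    have "c x = 0"
    proof (rule ccontr)
      assume "c x \<noteq> 0"
      then have "x = (\<Sum>i\<in>B. vscale (c i) i)"
        using rest by (simp add: bit_fun_add_eq_0_iff)
      then show False
        using x by (auto simp: z2_span_def)
    qed
    then have "\<forall>i\<in>B. c i = 0"
      using rest z2_indep_familyD[OF indep, of c] by simp
    then show ?thesis
      using \<open>c x = 0\<close> by simp
  qed
  then show ?thesis
    using \<open>finite B\<close> by (simp add: z2_indep_family_def)
qed

lemma z2_basis_exists: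
  assumes "finite X" "z2_subspace X"
  shows "\<exists>B. z2_basis vscale X B"
proof -
  have "\<exists>B. (B \<subseteq> X \<and> z2_indep_family vscale id B)
           \<and> (\<forall>B'. B' \<subseteq> X \<and> z2_indep_family vscale id B' \<longrightarrow> card B' \<le> card B)"
  proof (rule Lattices_Big.ex_has_greatest_nat)
    show "{} \<subseteq> X \<and> z2_indep_family vscale id {}"
      by (simp add: z2_indep_family_def)
    show "\<forall>B. B \<subseteq> X \<and> z2_indep_family vscale id B \<longrightarrow> card B < Suc (card X)"
      using assms(1) card_mono by (blast intro: le_imp_less_Suc)
  qed
  then obtain B where B: "B \<subseteq> X" "z2_indep_family vscale id B"
    and max: "\<And>B'. B' \<subseteq> X \<Longrightarrow> z2_indep_family vscale id B' \<Longrightarrow> card B' \<le> card B"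
    by blast
  have "finite B"
    using B by (simp add: z2_indep_family_def)
  have "X \<subseteq> z2_span vscale B"
  proof
    fix x assume "x \<in> X"
    show "x \<in> z2_span vscale B"
    proof (rule ccontr)
      assume x: "x \<notin> z2_span vscale B"
      then have "z2_indep_family vscale id (insert x B)"
        using B(2) by (rule z2_indep_family_insert[rotated])
      moreover have "x \<notin> B"
        using x mem_z2_span_self[OF \<open>finite B\<close>] by blast
      ultimately show False
        using max[of "insert x B"] B(1) \<open>x \<in> X\<close> \<open>finite B\<close> by simp
    qed
  qed
  moreover have "z2_span vscale B \<subseteq> X"
    using B sum_vscale_mem[OF assms(2)] by (auto simp: z2_span_def)
  ultimately show ?thesis
    using B by (auto simp: z2_basis_def)
qed

section \<open>Coefficients of the polynomials\<close>

definition mono_exp :: "nat \<Rightarrow> nat set \<Rightarrow> nat \<Rightarrow>\<^sub>0 nat" where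
  "mono_exp k S = Poly_Mapping.single 0 k + (\<Sum>j\<in>S. Poly_Mapping.single j 1)"

lemma lookup_mono: "Poly_Mapping.lookup (mono k S) e = (if mono_exp k S = e then 1 else 0)"
  by (simp add: mono_def mono_exp_def lookup_single when_def)

lemma lookup_pscale: "Poly_Mapping.lookup (pscale c P) e = c * Poly_Mapping.lookup P e"
  by (cases c) (simp_all add: pscale_def)

lemma lookup_mono_exp:
  assumes "finite S" "0 \<notin> S"
  shows "Poly_Mapping.lookup (mono_exp k S) j = (if j = 0 then k else if j \<in> S then 1 else 0)"
  using assms by (auto simp: mono_exp_def lookup_add lookup_sum lookup_single when_def)

lemma mono_exp_inject:
  assumes "finite S" "0 \<notin> S" "finite S'" "0 \<notin> S'"
  shows "mono_exp k S = mono_exp k' S' \<longleftrightarrow> k = k' \<and> S = S'"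
proof
  assume eq: "mono_exp k S = mono_exp k' S'"
  have "(if j = 0 then k else if j \<in> S then 1 else 0) = (if j = 0 then k' else if j \<in> S' then 1 else (0::nat))" for j
    using arg_cong[OF eq, of "\<lambda>e. Poly_Mapping.lookup e j"] assms by (simp add: lookup_mono_exp)
  then show "k = k' \<and> S = S'"
    using assms by (metis (full_types) one_neq_zero subsetI subset_antisym)
qed simp

lemma Lsets_eq: "Lsets m = ksubsets {1..2 * m} (m + 1)"
  by (simp add: Lsets_def ksubsets_def)

lemma mem_ksubsets_interval_1D: "S \<in> ksubsets {1..n::nat} k \<Longrightarrow> finite S \<and> 0 \<notin> S"
  by (auto simp: ksubsets_def intro: finite_subset)

lemma lookup_sum_pp:
  "Poly_Mapping.lookup (\<Sum>L\<in>Lsets m. pscale (xi L) (pp m L)) e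
     = (\<Sum>S\<in>ksubsets {1..2 * m} (m - 1). if mono_exp 1 S = e then supset_sum {1..2 * m} (m + 1) xi S else 0)"
proof -
  let ?U = "{1..2 * m}"
  have pp_eq: "Poly_Mapping.lookup (pp m L) e
      = (\<Sum>S\<in>ksubsets ?U (m - 1). if S \<subseteq> L then (if mono_exp 1 S = e then 1 else 0) else 0)"
    if L: "L \<in> ksubsets ?U (m + 1)" for L
  proof -
    have "{S. S \<subseteq> L \<and> card S = m - 1} = {S \<in> ksubsets ?U (m - 1). S \<subseteq> L}"
      using L by (auto simp: ksubsets_def)
    then have "Poly_Mapping.lookup (pp m L) e
        = (\<Sum>S\<in>{S \<in> ksubsets ?U (m - 1). S \<subseteq> L}. if mono_exp 1 S = e then 1 else 0)"
      by (simp add: pp_def lookup_sum lookup_mono)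
    also have "\<dots> = (\<Sum>S\<in>ksubsets ?U (m - 1). if S \<subseteq> L then (if mono_exp 1 S = e then 1 else 0) else 0)"
      by (rule sum.inter_filter) simp
    finally show ?thesis .
  qed
  have "Poly_Mapping.lookup (\<Sum>L\<in>Lsets m. pscale (xi L) (pp m L)) e
          = (\<Sum>L\<in>ksubsets ?U (m + 1). \<Sum>S\<in>ksubsets ?U (m - 1). if S \<subseteq> L \<and> mono_exp 1 S = e then xi L else 0)"
    by (auto simp: lookup_sum lookup_pscale Lsets_eq pp_eq sum_distrib_left intro!: sum.cong)
  also have "\<dots> = (\<Sum>S\<in>ksubsets ?U (m - 1). if mono_exp 1 S = e then supset_sum ?U (m + 1) xi S else 0)"
    by (subst sum.swap) (auto simp: supset_sum_def intro!: sum.cong)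
  finally show ?thesis .
qed

lemma Xspace_eq: "Xspace m = incl_kernel {1..2 * m} (m + 1) (m - 1)"
proof -
  let ?U = "{1..2 * m}"
  have "(\<Sum>L\<in>Lsets m. pscale (xi L) (pp m L)) = 0 \<longleftrightarrow> (\<forall>S\<in>ksubsets ?U (m - 1). supset_sum ?U (m + 1) xi S = 0)"
    for xi
  proof
    assume P: "(\<Sum>L\<in>Lsets m. pscale (xi L) (pp m L)) = 0"
    show "\<forall>S\<in>ksubsets ?U (m - 1). supset_sum ?U (m + 1) xi S = 0"
    proof
      fix S0 assume S0: "S0 \<in> ksubsets ?U (m - 1)"
      have "mono_exp 1 S = mono_exp 1 S0 \<longleftrightarrow> S = S0" if "S \<in> ksubsets ?U (m - 1)" for S
        using mono_exp_inject mem_ksubsets_interval_1D that S0 by metis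
      then have "Poly_Mapping.lookup (\<Sum>L\<in>Lsets m. pscale (xi L) (pp m L)) (mono_exp 1 S0) = supset_sum ?U (m + 1) xi S0"
        using S0 by (simp add: lookup_sum_pp sum.delta' cong: sum.cong)
      then show "supset_sum ?U (m + 1) xi S0 = 0"
        using P by simp
    qed
  next
    assume "\<forall>S\<in>ksubsets ?U (m - 1). supset_sum ?U (m + 1) xi S = 0"
    then show "(\<Sum>L\<in>Lsets m. pscale (xi L) (pp m L)) = 0"
      by (intro poly_mapping_eqI) (auto simp only: lookup_sum_pp lookup_zero if_cancel intro!: sum.neutral)
  qed
  then show ?thesis
    by (auto simp: Xspace_def incl_kernel_def supported_on_def Lsets_eq)
qed

lemma lookup_Fxi:
  assumes S0: "S0 \<subseteq> {1..2 * m}" "card S0 \<le> m - 2"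
  shows "Poly_Mapping.lookup (Fxi m xi) (mono_exp (m - card S0) S0) = supset_sum {1..2 * m} (m + 1) xi S0"
proof -
  let ?U = "{1..2 * m}" and ?e = "mono_exp (m - card S0) S0"
  have fin_S0: "finite S0" "0 \<notin> S0"
    using S0(1) finite_subset[OF S0(1)] by auto
  have ff_eq: "Poly_Mapping.lookup (ff m L) ?e = (if S0 \<subseteq> L then 1 else 0)"
    if L: "L \<in> ksubsets ?U (m + 1)" for L
  proof -
    have fin_L: "finite L" "0 \<notin> L" "card L = m + 1"
      using mem_ksubsets_interval_1D[OF L] L by (simp_all add: ksubsets_def)
    have "Poly_Mapping.lookup (ff m L) ?e = (\<Sum>S\<in>{S. S \<subseteq> L \<and> card S \<le> m - 2}. if S = S0 then 1 else 0)"
      unfolding ff_def lookup_sum lookup_mono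
    proof (rule sum.cong)
      fix S assume "S \<in> {S. S \<subseteq> L \<and> card S \<le> m - 2}"
      then have "S \<subseteq> L"
        by simp
      then have "finite S" "0 \<notin> S"
        using fin_L(1,2) finite_subset by blast+
      moreover have "card L - card S - 1 = m - card S"
        using fin_L(3) by simp
      ultimately show "(if mono_exp (card L - card S - 1) S = ?e then 1 else 0) = (if S = S0 then 1 else (0::bit))"
        using mono_exp_inject[OF _ _ fin_S0] by auto
    qed simp
    also have "\<dots> = (if S0 \<subseteq> L then 1 else 0)"
    proof -
      have "finite {S. S \<subseteq> L \<and> card S \<le> m - 2}"
        by (rule finite_subset[of _ "Pow L"]) (auto simp: fin_L(1))
      then show ?thesis
        using S0(2) by (simp add: sum.delta)
    qed
    finally show ?thesis .
  qed
  have "Poly_Mapping.lookup (Fxi m xi) ?e = (\<Sum>L\<in>ksubsets ?U (m + 1). xi L * Poly_Mapping.lookup (ff m L) ?e)"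
    by (simp add: Fxi_def lookup_sum lookup_pscale Lsets_eq)
  also have "\<dots> = supset_sum ?U (m + 1) xi S0"
    unfolding supset_sum_def by (intro sum.cong) (simp_all add: ff_eq)
  finally show ?thesis .
qed

lemma Fxi_independent:
  assumes \<Omega>: "z2_basis vscale (Xspace m) \<Omega>"
  shows "z2_indep_family pscale (Fxi m) \<Omega>"
proof -
  let ?U = "{1..2 * m}"
  have \<Omega>_sub: "\<Omega> \<subseteq> incl_kernel ?U (m + 1) (m - 1)" and indep: "z2_indep_family vscale id \<Omega>"
    using \<Omega> by (auto simp: z2_basis_def Xspace_eq)
  have "\<forall>\<xi>\<in>\<Omega>. c \<xi> = 0" if c: "(\<Sum>\<xi>\<in>\<Omega>. pscale (c \<xi>) (Fxi m \<xi>)) = 0" for c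
  proof -
    define \<zeta> where "\<zeta> = (\<Sum>\<xi>\<in>\<Omega>. vscale (c \<xi>) \<xi>)"
    have \<zeta>: "\<zeta> \<in> incl_kernel ?U (m + 1) (m - 1)"
      unfolding \<zeta>_def using z2_subspace_incl_kernel \<Omega>_sub by (rule sum_vscale_mem)
    have "supset_sum ?U (m + 1) \<zeta> T = 0" if T: "T \<subseteq> ?U" "card T + (m + 1) \<le> card ?U" for T
    proof (cases "card T = m - 1")
      case True
      then show ?thesis
        using \<zeta> T by (simp add: incl_kernel_def ksubsets_def)
    next
      case False
      then have "card T \<le> m - 2"
        using T by simp
      then have "supset_sum ?U (m + 1) \<zeta> T
                   = Poly_Mapping.lookup (\<Sum>\<xi>\<in>\<Omega>. pscale (c \<xi>) (Fxi m \<xi>)) (mono_exp (m - card T) T)"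
        using T(1) by (simp add: \<zeta>_def supset_sum_sum_vscale lookup_sum lookup_pscale lookup_Fxi)
      then show ?thesis
        using c by simp
    qed
    then have "\<zeta> = 0"
      using \<zeta> by (intro eq_0_if_low_supset_sums_vanish[of ?U]) (auto simp: incl_kernel_def)
    then show ?thesis
      using z2_indep_familyD[OF indep, of c] by (simp add: \<zeta>_def)
  qed
  then show ?thesis
    using indep by (simp add: z2_indep_family_def)
qed

theorem lemma7:
  fixes m n :: nat
  assumes "n = 2 * m + 1" and "n \<ge> 5"
  shows "(\<exists>B. z2_basis vscale (Xspace m) B)
       \<and> (\<forall>B. z2_basis vscale (Xspace m) B \<longrightarrow>
              int (card B) = int ((n - 1) choose (m + 1)) - int (alpha m))
       \<and> (\<forall>\<Omega>. z2_basis vscale (Xspace m) \<Omega> \<longrightarrow> z2_indep_family pscale (Fxi m) \<Omega>)"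
proof (intro conjI allI impI)
  have X: "Xspace m = incl_kernel {1..2 * m} (m + 1) (m - 1)"
    by (rule Xspace_eq)
  show "\<exists>B. z2_basis vscale (Xspace m) B"
    unfolding X by (intro z2_basis_exists finite_incl_kernel z2_subspace_incl_kernel) simp
  fix B assume "z2_basis vscale (Xspace m) B"
  then have "2 ^ card B = (2::nat) ^ beta m"
    using card_of_z2_basis card_incl_kernel[of m] assms X by simp
  then show "int (card B) = int ((n - 1) choose (m + 1)) - int (alpha m)"
    using beta_eq[of m] assms by simp
qed (rule Fxi_independent)

end
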